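(* Fix $n\ge3$ and $M>0$ satisfying (A) and (B). In the environment $\Gamma^0$ there exists an SCF $f^*:V^n\to[0,1]$ that is anonymous and BIC in $\Gamma^0$ and satisfies $W^0(f^* )>W^0(f^{(n)})$.
   Context: Fix $n\ge 3$ agents $N=\{1,\dots,n\}$, choosing between Reform $R$ (agent $i$'s utility $v_i$) and Status quo $S$ (utility $0$). Let $M>0$ satisfy (A): $\frac{2}{n}\left[-M^2+M+n-2\right]+\frac{n-2}{n}\left[2M+n-4\right]<0$, and (B): $2M-(n-2)>0$. Let $V=\{-M^2,-1,1,M\}$. For $\epsilon\in[0,1/4]$, the environment $\Gamma^\epsilon$ has independent values $\tilde v_1,\dots,\tilde v_n$ with distributions: for agents $1,2$: $\Pr(-M^2)=0.5-\epsilon$, $\Pr(-1)=\epsilon$, $\Pr(1)=\epsilon$, $\Pr(M)=0.5-\epsilon$; for agents $3,\dots,n$: $\Pr(-M^2)=\epsilon$, $\Pr(-1)=0.5-\epsilon$, $\Pr(1)=0.5-\epsilon$, $\Pr(M)=\epsilon$. (In particular, in $\Gamma^0$ agents 1,2 take values in $\{-M^2,M\}$ and agents $3,\dots,n$ in $\{-1,1\}$, each with probability $1/2$.) An SCF is any $f:V^n\to[0,1]$, defined on all of $V^n$ (including zero-probability profiles). $f$ is anonymous if $f(v)=f(\pi v)$ for all $v\in V^n$ and permutations $\pi$ of $N$, where $\pi v=(v_{\pi(1)},\dots,v_{\pi(n)})$. $f$ is BIC in $\Gamma^\epsilon$ if for every agent $i$ and all reports $v_i,v_i'\in V$: $v_i\,\mathbb{E}^\epsilon(f(v_i,\tilde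 v_{-i}))\ge v_i\,\mathbb{E}^\epsilon(f(v_i',\tilde v_{-i}))$, expectation over $\tilde v_{-i}$ under $\Gamma^\epsilon$. For $v\in V^n$, $\chi(v)=\{i: v_i>0\}$; the unanimity rule is $f^{(n)}(v)=1$ if $|\chi(v)|=n$ and $0$ otherwise. $W^\epsilon(f)=\mathbb{E}^\epsilon\big(f(\tilde v)\sum_i\tilde v_i\big)$. *)

theory Defs
  imports Complex_Main "HOL-Combinatorics.Permutations"
begin

text \<open>Agents are indexed 0,...,n-1 (paper's agents 1,2 are 0,1 here).
A profile is an extensional function in PiE {..<n} (\<lambda>_. V).\<close>

definition Vals :: "real \<Rightarrow> real set" where
  "Vals M = {-(M^2), -1, 1, M}"

definition profiles :: "nat \<Rightarrow> real \<Rightarrow> (nat \<Rightarrow> real) set" where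
  "profiles n M = PiE {..<n} (\<lambda>_. Vals M)"

definition gamma_pr :: "real \<Rightarrow> real \<Rightarrow> nat \<Rightarrow> real \<Rightarrow> real" where
  "gamma_pr M eps i x =
     (if i < 2 then
        (if x = -(M^2) then 1/2 - eps else if x = -1 then eps
         else if x = 1 then eps else if x = M then 1/2 - eps else 0)
      else
        (if x = -(M^2) then eps else if x = -1 then 1/2 - eps
         else if x = 1 then 1/2 - eps else if x = M then eps else 0))"

definition interim :: "nat \<Rightarrow> real \<Rightarrow> real \<Rightarrow> ((nat \<Rightarrow> real) \<Rightarrow> real) \<Rightarrow> nat \<Rightarrow> real \<Rightarrow> real" where
  "interim n M eps f i vi =
     (\<Sum>w \<in> PiE ({..<n} - {i}) (\<lambda>_. Vals M).
        (\<Prod>j \<in> {..<n} - {i}. gamma_pr M eps j (w j)) * f (w(i := vi)))"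

definition is_SCF :: "nat \<Rightarrow> real \<Rightarrow> ((nat \<Rightarrow> real) \<Rightarrow> real) \<Rightarrow> bool" where
  "is_SCF n M f \<longleftrightarrow> (\<forall>v \<in> profiles n M. 0 \<le> f v \<and> f v \<le> 1)"

definition anonymous :: "nat \<Rightarrow> real \<Rightarrow> ((nat \<Rightarrow> real) \<Rightarrow> real) \<Rightarrow> bool" where
  "anonymous n M f \<longleftrightarrow>
     (\<forall>v \<in> profiles n M. \<forall>\<pi>. \<pi> permutes {..<n} \<longrightarrow> f (v \<circ> \<pi>) = f v)"

definition BIC :: "nat \<Rightarrow> real \<Rightarrow> real \<Rightarrow> ((nat \<Rightarrow> real) \<Rightarrow> real) \<Rightarrow> bool" where
  "BIC n M eps f \<longleftrightarrow>
     (\<forall>i < n. \<forall>vi \<in> Vals M. \<forall>vi' \<in> Vals M.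
        vi * interim n M eps f i vi \<ge> vi * interim n M eps f i vi')"

definition unanimity :: "nat \<Rightarrow> (nat \<Rightarrow> real) \<Rightarrow> real" where
  "unanimity n v = (if card {i \<in> {..<n}. v i > 0} = n then 1 else 0)"

definition welfare :: "nat \<Rightarrow> real \<Rightarrow> real \<Rightarrow> ((nat \<Rightarrow> real) \<Rightarrow> real) \<Rightarrow> real" where
  "welfare n M eps f =
     (\<Sum>v \<in> profiles n M. (\<Prod>j<n. gamma_pr M eps j (v j)) * (f v * (\<Sum>j<n. v j)))"

end

theory Submission
  imports Defs
begin

text \<open>In \<open>\<Gamma>\<^sup>0\<close> the big agents 0, 1 report \<open>M\<close> or \<open>-M\<^sup>2\<close> and the small agents
report \<open>\<plusminus>1\<close>. The mechanism \<open>f\<^sup>*\<close> depends only on how many agents report \<open>M\<close>,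
\<open>-M\<^sup>2\<close> and \<open>-1\<close>, so it is anonymous. On the support it is unanimity plus weight
\<open>1/(n-2)\<close> on the profiles where both big agents report \<open>M\<close> and exactly one small agent
reports \<open>-1\<close>; such a profile has total value \<open>2M + n - 4 > 0\<close> by (B), so welfare strictly
increases. For incentive compatibility it suffices that every agent faces one interim value
\<open>P\<close> on both positive reports and one value \<open>Q \<le> P\<close> on both negative reports. The interim
sums are uniform sums over the others' profiles in the support; fixing the reports of the
other big agents, these profiles correspond to the subsets of small agents reporting \<open>-1\<close>,
so every sum is a count of subsets of size 0 or 1. For a big agent reporting \<open>M\<close> this gives
\<open>1 + (n-2)/(n-2) = 2\<close>, which the off-support entries of \<open>f\<^sup>*\<close> match for the report 1.\<close>

section \<open>Reduction to the support of \<open>\<Gamma>\<^sup>0\<close>\<close>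

definition big_vals :: "real \<Rightarrow> real set" where
  "big_vals M = {-(M^2), M}"

definition small_vals :: "real set" where
  "small_vals = {-1, 1}"

definition support0 :: "real \<Rightarrow> nat \<Rightarrow> real set" where
  "support0 M j = (if j < 2 then big_vals M else small_vals)"

definition others_support :: "nat \<Rightarrow> real \<Rightarrow> nat \<Rightarrow> (nat \<Rightarrow> real) set" where
  "others_support n M i = PiE ({..<n} - {i}) (support0 M)"

lemma Vals_distinct:
  fixes M :: real
  assumes "M > 0" "M \<noteq> 1"
  shows "M \<noteq> -(M^2)" "M \<noteq> -1" "M \<noteq> 1" "M^2 \<noteq> 1" "M^2 \<noteq> -1"
proof -
  show "M^2 \<noteq> 1"
    using assms by (auto simp: power2_eq_1_iff)
  have "M^2 > 0"
    using assms by simp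
  then show "M \<noteq> -(M^2)" "M \<noteq> -1" "M \<noteq> 1" "M^2 \<noteq> -1"
    using assms by linarith+
qed

lemma gamma_pr_zero:
  assumes "M > 0" "M \<noteq> 1"
  shows "gamma_pr M 0 j x = (if x \<in> support0 M j then 1/2 else 0)"
  using Vals_distinct[OF assms]
  by (auto simp: gamma_pr_def support0_def big_vals_def small_vals_def)

lemma support0_subset_Vals: "support0 M j \<subseteq> Vals M"
  by (auto simp: support0_def big_vals_def small_vals_def Vals_def)

lemma finite_Vals: "finite (Vals M)"
  by (simp add: Vals_def)

lemma sum_PiE_supported_weights:
  fixes p :: "'a \<Rightarrow> 'b \<Rightarrow> 'c::comm_semiring_1"
  assumes "finite I" "\<And>j. j \<in> I \<Longrightarrow> finite (U j)" "\<And>j. j \<in> I \<Longrightarrow> T j \<subseteq> U j"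
    and p: "\<And>j x. j \<in> I \<Longrightarrow> x \<in> U j \<Longrightarrow> p j x = (if x \<in> T j then c else 0)"
  shows "(\<Sum>w\<in>PiE I U. (\<Prod>j\<in>I. p j (w j)) * g w) = c ^ card I * (\<Sum>w\<in>PiE I T. g w)"
proof -
  have weight: "(\<Prod>j\<in>I. p j (w j)) = (if w \<in> PiE I T then c ^ card I else 0)"
    if w: "w \<in> PiE I U" for w
  proof (cases "w \<in> PiE I T")
    case True
    then have "(\<Prod>j\<in>I. p j (w j)) = (\<Prod>j\<in>I. c)"
      using w p by (intro prod.cong) (auto simp: PiE_iff)
    then show ?thesis using True by simp
  next
    case False
    then obtain j where "j \<in> I" "w j \<notin> T j"
      using w False by (auto simp: PiE_iff)
    then show ?thesis using w p assms(1) by (auto simp: PiE_iff intro!: prod_zero bexI[of _ j])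
  qed
  have "PiE I T \<subseteq> PiE I U"
    using assms(3) by (auto simp: PiE_iff)
  then have "(\<Sum>w\<in>PiE I U. (\<Prod>j\<in>I. p j (w j)) * g w) = (\<Sum>w\<in>PiE I T. c ^ card I * g w)"
    using assms(1,2) by (intro sum.mono_neutral_cong_right) (auto simp: weight finite_PiE)
  then show ?thesis by (simp add: sum_distrib_left)
qed

lemma interim_zero:
  assumes "M > 0" "M \<noteq> 1" "i < n"
  shows "interim n M 0 f i x = (1/2)^(n-1) * (\<Sum>w\<in>others_support n M i. f (w(i := x)))"
proof -
  have "card ({..<n} - {i}) = n - 1" using assms(3) by simp
  then show ?thesis
    unfolding interim_def others_support_def using assms(1,2)
    by (subst sum_PiE_supported_weights) (auto simp: gamma_pr_zero finite_Vals support0_subset_Vals)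
qed

lemma welfare_zero:
  assumes "M > 0" "M \<noteq> 1"
  shows "welfare n M 0 f = (1/2)^n * (\<Sum>v\<in>PiE {..<n} (support0 M). f v * (\<Sum>j<n. v j))"
  unfolding welfare_def profiles_def using assms
  by (subst sum_PiE_supported_weights) (auto simp: gamma_pr_zero finite_Vals support0_subset_Vals)

lemma BIC_if_interim_two_valued:
  assumes "M > 0"
    and "\<And>i. i < n \<Longrightarrow> \<exists>P Q. Q \<le> P
           \<and> interim n M eps f i M = P \<and> interim n M eps f i 1 = P
           \<and> interim n M eps f i (-1) = Q \<and> interim n M eps f i (-(M^2)) = Q"
  shows "BIC n M eps f"
  unfolding BIC_def
proof (intro allI impI ballI)
  fix i x y assume "i < n" "x \<in> Vals M" "y \<in> Vals M"
  moreover obtain P Q where "Q \<le> P" "interim n M eps f i M = P" "interim n M eps f i 1 = P"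
      "interim n M eps f i (-1) = Q" "interim n M eps f i (-(M^2)) = Q"
    using assms(2)[OF \<open>i < n\<close>] by blast
  ultimately show "x * interim n M eps f i y \<le> x * interim n M eps f i x"
    using \<open>M > 0\<close> by (auto simp: Vals_def intro: mult_left_mono mult_left_mono_neg)
qed

lemma unanimity_iff_all_positive: "unanimity n v = (if \<forall>j<n. v j > 0 then 1 else 0)"
proof -
  have "card {j \<in> {..<n}. v j > 0} = n \<longleftrightarrow> {j \<in> {..<n}. v j > 0} = {..<n}"
    by (metis (no_types, lifting) card_lessThan card_subset_eq finite_lessThan mem_Collect_eq subsetI)
  then show ?thesis
    unfolding unanimity_def by auto
qed

definition report_count :: "nat \<Rightarrow> (nat \<Rightarrow> real) \<Rightarrow> real \<Rightarrow> nat" where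
  "report_count n v x = card {j \<in> {..<n}. v j = x}"

lemma report_count_permute:
  assumes "\<pi> permutes {..<n}"
  shows "report_count n (v \<circ> \<pi>) x = report_count n v x"
proof -
  have "(\<Sum>j<n. if v (\<pi> j) = x then 1 else 0) = (\<Sum>j<n. if v j = x then 1 else (0::nat))"
    using permutes_imp_bij[OF assms] by (rule sum.reindex_bij_betw)
  then show ?thesis
    unfolding report_count_def by (simp add: sum.inter_filter[symmetric])
qed

lemma report_count_split:
  assumes "i < n"
  shows "report_count n v x = of_bool (v i = x) + card {j \<in> {..<n} - {i}. v j = x}"
proof -
  have "{j \<in> {..<n}. v j = x} = (if v i = x then {i} else {}) \<union> {j \<in> {..<n} - {i}. v j = x}"
    using assms by auto
  then show ?thesis
    unfolding report_count_def by (simp add: card_insert_if)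
qed

text \<open>With \<open>a\<close>, \<open>b\<close>, \<open>c\<close> the numbers of reports \<open>M\<close>, \<open>-M\<^sup>2\<close>, \<open>-1\<close>: on the support
of \<open>\<Gamma>\<^sup>0\<close> we have \<open>a + b = 2\<close>, and only the entries \<open>(2,0,0)\<close> and \<open>(2,0,1)\<close> are nonzero.
The other entries concern a single off-support report and are chosen so that the interim
value of the report 1 equals that of \<open>M\<close>, and that of \<open>-M\<^sup>2\<close> equals that of \<open>-1\<close>.\<close>

definition fstar :: "nat \<Rightarrow> real \<Rightarrow> (nat \<Rightarrow> real) \<Rightarrow> real" where
  "fstar n M v =
     (let a = report_count n v M; b = report_count n v (-(M^2)); c = report_count n v (-1)
      in if b = 0 \<and> c = 0 \<and> a \<in> {1, 2, 3} \<or> a = 0 \<and> b = 1 \<and> c = 0 then 1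
         else if b = 0 \<and> c = 1 \<and> a \<in> {2, 3} \<or> a = 0 \<and> b = 3 \<and> c = 0 then 1 / real (n - 2)
         else 0)"

lemma anonymous_fstar: "anonymous n M (fstar n M)"
  unfolding anonymous_def fstar_def by (simp add: report_count_permute)

lemma fstar_range:
  assumes "n \<ge> 3"
  shows "0 \<le> fstar n M v" "fstar n M v \<le> 1"
  using assms unfolding fstar_def Let_def by auto

section \<open>Counting the others' profiles\<close>

definition dissenters :: "nat \<Rightarrow> (nat \<Rightarrow> real) \<Rightarrow> nat \<Rightarrow> nat set" where
  "dissenters n v i = {j \<in> {2..<n} - {i}. v j = -1}"

definition others_profile :: "nat \<Rightarrow> nat \<Rightarrow> real \<Rightarrow> nat set \<Rightarrow> nat \<Rightarrow> real" where
  "others_profile n i b D =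
     (\<lambda>j. if j \<in> {..<n} - {i} then (if j < 2 then b else if j \<in> D then -1 else 1) else undefined)"

lemma dissenters_fun_upd [simp]: "dissenters n (v(i := x)) i = dissenters n v i"
  unfolding dissenters_def by auto

lemma card_Collect_less_2: "card {j \<in> {..<2::nat}. P j} = of_bool (P 0) + of_bool (P 1)"
proof -
  have "card {j \<in> {..<2::nat}. P j} = (\<Sum>j<2. if P j then 1 else 0)"
    by (simp add: sum.inter_filter[symmetric])
  then show ?thesis by (simp add: numeral_2_eq_2)
qed

lemma card_big_others_small_agent:
  fixes i :: nat
  assumes "2 \<le> i"
  shows "card {j \<in> {..<2} - {i}. v j = y} = of_bool (v 0 = y) + of_bool (v 1 = y)"
proof -
  have "{j \<in> {..<2} - {i}. v j = y} = {j \<in> {..<2}. v j = y}" using assms by auto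
  then show ?thesis using card_Collect_less_2[of "\<lambda>j. v j = y"] by simp
qed

lemma card_big_others_big_agent:
  fixes i :: nat
  assumes "i < 2"
  shows "card {j \<in> {..<2} - {i}. v j = y} = of_bool (v (1 - i) = y)"
proof -
  have "{..<2} - {i} = {1 - i}" using assms by (auto simp: less_2_cases_iff)
  then show ?thesis by (simp add: Collect_conv_if)
qed

definition big_others_agree :: "(nat \<Rightarrow> real) \<Rightarrow> nat \<Rightarrow> real \<Rightarrow> bool" where
  "big_others_agree v i b \<longleftrightarrow> (\<forall>j \<in> {..<2} - {i}. v j = b)"

lemma big_others_agree_small_agent:
  "2 \<le> i \<Longrightarrow> big_others_agree v i b \<longleftrightarrow> v 0 = b \<and> v 1 = b"
  by (auto simp: big_others_agree_def less_2_cases_iff)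

lemma big_others_agree_big_agent:
  "i < 2 \<Longrightarrow> big_others_agree v i b \<longleftrightarrow> v (1 - i) = b"
  by (auto simp: big_others_agree_def less_2_cases_iff)

definition fstar_weight :: "nat \<Rightarrow> nat \<Rightarrow> real" where
  "fstar_weight n k = (if k = 0 then 1 else if k = 1 then 1 / real (n - 2) else 0)"

lemma big_others_agree_fun_upd [simp]: "big_others_agree (v(i := x)) i b \<longleftrightarrow> big_others_agree v i b"
  by (simp add: big_others_agree_def)

lemma others_support_fun_upd:
  "w \<in> others_support n M i \<Longrightarrow> \<forall>j \<in> {..<n} - {i}. (w(i := x)) j \<in> support0 M j"
  by (auto simp: others_support_def)

lemma fun_upd_others_support_PiE:
  assumes "w \<in> others_support n M i" "i < n" "x \<in> support0 M i"
  shows "w(i := x) \<in> PiE {..<n} (support0 M)"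
  using assms by (auto simp: others_support_def PiE_iff extensional_def)

lemma finite_others_support: "finite (others_support n M i)"
  unfolding others_support_def
  by (rule finite_PiE) (auto simp: support0_def big_vals_def small_vals_def)

lemma others_profile_mem:
  "b \<in> big_vals M \<Longrightarrow> others_profile n i b D \<in> others_support n M i"
  by (auto simp: others_profile_def others_support_def support0_def small_vals_def split: if_splits)

lemma big_others_agree_others_profile:
  "2 \<le> n \<Longrightarrow> big_others_agree (others_profile n i b D) i b"
  by (auto simp: big_others_agree_def others_profile_def)

lemma dissenters_others_profile:
  "D \<subseteq> {2..<n} - {i} \<Longrightarrow> dissenters n (others_profile n i b D) i = D"
  by (auto simp: dissenters_def others_profile_def)

lemma others_profile_dissenters:
  assumes "w \<in> others_support n M i" "big_others_agree w i b"
  shows "others_profile n i b (dissenters n w i) = w"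
proof
  fix j
  show "others_profile n i b (dissenters n w i) j = w j"
  proof (cases "j \<in> {..<n} - {i}")
    case True
    then have "w j \<in> support0 M j"
      using assms(1) by (auto simp: others_support_def)
    then show ?thesis
      using True assms(2)
      by (auto simp: others_profile_def dissenters_def big_others_agree_def support0_def small_vals_def)
  next
    case False
    then show ?thesis
      using assms(1) by (auto simp: others_profile_def others_support_def PiE_def extensional_def)
  qed
qed

lemma sum_others_support_agreeing:
  assumes "2 \<le> n" "b \<in> big_vals M"
  shows "(\<Sum>w\<in>others_support n M i. if big_others_agree w i b then h (card (dissenters n w i)) else 0)
    = (\<Sum>D\<in>Pow ({2..<n} - {i}). h (card D))"
proof -
  let ?A = "{w \<in> others_support n M i. big_others_agree w i b}"
  have "bij_betw (others_profile n i b) (Pow ({2..<n} - {i})) ?A"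
    by (rule bij_betw_byWitness[where f' = "\<lambda>w. dissenters n w i"])
      (use assms in \<open>auto simp: dissenters_others_profile others_profile_dissenters
        others_profile_mem big_others_agree_others_profile, auto simp: dissenters_def\<close>)
  then have "(\<Sum>w\<in>?A. h (card (dissenters n w i))) = (\<Sum>D\<in>Pow ({2..<n} - {i}). h (card D))"
    by (subst sum.reindex_bij_betw[symmetric]) (auto simp: dissenters_others_profile)
  then show ?thesis
    by (simp add: sum.inter_filter[symmetric] finite_others_support)
qed

lemma sum_Pow_card_indicator:
  assumes "finite S"
  shows "(\<Sum>D\<in>Pow S. if card D = k then c else 0) = of_nat (card S choose k) * (c :: 'a::semiring_1)"
proof -
  have "(\<Sum>D\<in>Pow S. if card D = k then c else 0) = (\<Sum>D\<in>{D. D \<subseteq> S \<and> card D = k}. c)"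
    using assms by (simp add: sum.inter_filter[symmetric] Collect_conj_eq Pow_def)
  then show ?thesis using n_subsets[OF assms] by simp
qed

lemma sum_Pow_fstar_weight:
  assumes "finite S"
  shows "(\<Sum>D\<in>Pow S. fstar_weight n (card D)) = 1 + real (card S) / real (n - 2)"
proof -
  have "fstar_weight n k = (if k = 0 then 1 else 0) + (if k = 1 then 1 / real (n - 2) else 0)" for k
    by (simp add: fstar_weight_def)
  then show ?thesis
    using assms by (simp add: sum.distrib sum_Pow_card_indicator)
qed

section \<open>Interim values and welfare of \<open>f\<^sup>*\<close>\<close>

context
  fixes n :: nat and M :: real
  assumes n_ge_3: "n \<ge> 3" and M_pos: "M > 0" and M_neq_1: "M \<noteq> 1"
begin

lemma report_count_big:
  assumes "i < n" "\<forall>j \<in> {..<n} - {i}. v j \<in> support0 M j" "y \<in> big_vals M"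
  shows "report_count n v y = of_bool (v i = y) + card {j \<in> {..<2} - {i}. v j = y}"
proof -
  have "v j \<noteq> y" if "j \<in> {..<n} - {i}" "\<not> j < 2" for j
    using bspec[OF assms(2) that(1)] that(2) assms(3) Vals_distinct[OF M_pos M_neq_1]
    by (auto simp: support0_def big_vals_def small_vals_def)
  then have "{j \<in> {..<n} - {i}. v j = y} = {j \<in> {..<2} - {i}. v j = y}"
    using n_ge_3 by auto
  then show ?thesis using report_count_split[OF assms(1)] by simp
qed

lemma report_count_minus_one:
  assumes "i < n" "\<forall>j \<in> {..<n} - {i}. v j \<in> support0 M j"
  shows "report_count n v (-1) = of_bool (v i = -1) + card (dissenters n v i)"
proof -
  have "v j \<noteq> -1" if "j \<in> {..<n} - {i}" "j < 2" for j
    using bspec[OF assms(2) that(1)] that(2) Vals_distinct[OF M_pos M_neq_1]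
    by (auto simp: support0_def big_vals_def)
  then have "{j \<in> {..<n} - {i}. v j = -1} = dissenters n v i"
    by (force simp: dissenters_def)
  then show ?thesis using report_count_split[OF assms(1)] by simp
qed

lemma fstar_small_agent:
  assumes "2 \<le> i" "i < n" and v: "\<forall>j \<in> {..<n} - {i}. v j \<in> support0 M j"
  defines "k \<equiv> card (dissenters n v i)"
  shows "v i = M \<or> v i = 1 \<Longrightarrow>
      fstar n M v = (if big_others_agree v i M then fstar_weight n k else 0)"
    and "v i = -1 \<Longrightarrow>
      fstar n M v = (if big_others_agree v i M then (if k = 0 then 1 / real (n - 2) else 0) else 0)"
    and "v i = -(M^2) \<Longrightarrow>
      fstar n M v = (if big_others_agree v i (-(M^2)) then (if k = 0 then 1 / real (n - 2) else 0) else 0)"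
proof -
  have "v 0 \<in> big_vals M" "v 1 \<in> big_vals M"
    using bspec[OF v, of 0] bspec[OF v, of 1] assms(1,2) by (auto simp: support0_def)
  then have "(v 0 = M \<or> v 0 = -(M^2)) \<and> (v 1 = M \<or> v 1 = -(M^2))"
    by (auto simp: big_vals_def)
  note big_reports = this[THEN conjunct1] this[THEN conjunct2]
  have "report_count n v M = of_bool (v i = M) + of_bool (v 0 = M) + of_bool (v 1 = M)"
    "report_count n v (-(M^2)) = of_bool (v i = -(M^2)) + of_bool (v 0 = -(M^2)) + of_bool (v 1 = -(M^2))"
    "report_count n v (-1) = of_bool (v i = -1) + k"
    using report_count_big[OF assms(2) v, of M] report_count_big[OF assms(2) v, of "-(M^2)"]
      report_count_minus_one[OF assms(2) v]
      card_big_others_small_agent[OF assms(1), of v M] card_big_others_small_agent[OF assms(1), of v "-(M^2)"]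
    by (simp_all add: big_vals_def k_def)
  note simps = this fstar_def fstar_weight_def k_def big_others_agree_small_agent[OF assms(1)]
    Vals_distinct[OF M_pos M_neq_1] Vals_distinct[OF M_pos M_neq_1, THEN not_sym]
  show "v i = M \<or> v i = 1 \<Longrightarrow>
      fstar n M v = (if big_others_agree v i M then fstar_weight n k else 0)"
    using big_reports n_ge_3 by (elim disjE; simp add: simps)
  show "v i = -1 \<Longrightarrow>
      fstar n M v = (if big_others_agree v i M then (if k = 0 then 1 / real (n - 2) else 0) else 0)"
    using big_reports n_ge_3 by (elim disjE; simp add: simps)
  show "v i = -(M^2) \<Longrightarrow>
      fstar n M v = (if big_others_agree v i (-(M^2)) then (if k = 0 then 1 / real (n - 2) else 0) else 0)"
    using big_reports n_ge_3 by (elim disjE; simp add: simps)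
qed

lemma fstar_big_agent:
  assumes "i < 2" and v: "\<forall>j \<in> {..<n} - {i}. v j \<in> support0 M j"
  defines "k \<equiv> card (dissenters n v i)"
  shows "v i = M \<Longrightarrow> fstar n M v = (if big_others_agree v i M then fstar_weight n k else 0)"
    and "v i = 1 \<Longrightarrow> fstar n M v = (if k = 0 then 1 else 0)"
    and "v i = -1 \<or> v i = -(M^2) \<Longrightarrow> fstar n M v = 0"
proof -
  have "i < n" using assms(1) n_ge_3 by simp
  have "1 - i \<in> {..<n} - {i}" "1 - i < 2"
    using assms(1) n_ge_3 by (auto simp: less_2_cases_iff)
  then have "v (1 - i) = M \<or> v (1 - i) = -(M^2)"
    using bspec[OF v, of "1 - i"] by (auto simp: support0_def big_vals_def)
  moreover have "report_count n v M = of_bool (v i = M) + of_bool (v (1 - i) = M)"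
    "report_count n v (-(M^2)) = of_bool (v i = -(M^2)) + of_bool (v (1 - i) = -(M^2))"
    "report_count n v (-1) = of_bool (v i = -1) + k"
    using report_count_big[OF \<open>i < n\<close> v, of M] report_count_big[OF \<open>i < n\<close> v, of "-(M^2)"]
      report_count_minus_one[OF \<open>i < n\<close> v]
      card_big_others_big_agent[OF assms(1), of v M] card_big_others_big_agent[OF assms(1), of v "-(M^2)"]
    by (simp_all add: big_vals_def k_def)
  note simps = this fstar_def fstar_weight_def k_def big_others_agree_big_agent[OF assms(1)]
    Vals_distinct[OF M_pos M_neq_1] Vals_distinct[OF M_pos M_neq_1, THEN not_sym]
  ultimately show "v i = M \<Longrightarrow> fstar n M v = (if big_others_agree v i M then fstar_weight n k else 0)"
    and "v i = 1 \<Longrightarrow> fstar n M v = (if k = 0 then 1 else 0)"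
    and "v i = -1 \<or> v i = -(M^2) \<Longrightarrow> fstar n M v = 0"
    using n_ge_3 by (auto simp: simps)
qed

lemma fstar_big_agent_report_one:
  assumes "i < 2" and w: "w \<in> others_support n M i"
  shows "fstar n M (w(i := 1)) =
      (if big_others_agree w i M then (if card (dissenters n w i) = 0 then 1 else 0) else 0)
      + (if big_others_agree w i (-(M^2)) then (if card (dissenters n w i) = 0 then 1 else 0) else 0)"
proof -
  have other: "1 - i \<in> {..<n} - {i}" "1 - i < 2"
    using assms n_ge_3 by (auto simp: less_2_cases_iff)
  then have "w (1 - i) = M \<or> w (1 - i) = -(M^2)"
    using PiE_mem[OF w[unfolded others_support_def] other(1)] other(2)
    by (auto simp: support0_def big_vals_def)
  then show ?thesis
    using fstar_big_agent(2)[of i "w(i := 1)", OF assms(1) others_support_fun_upd[OF w]]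
      Vals_distinct[OF M_pos M_neq_1]
    by (auto simp: big_others_agree_big_agent[OF assms(1)])
qed

lemma sum_fstar_big_agent:
  assumes "i < 2"
  shows "(\<Sum>w\<in>others_support n M i. fstar n M (w(i := M))) = 2"
    and "(\<Sum>w\<in>others_support n M i. fstar n M (w(i := 1))) = 2"
    and "(\<Sum>w\<in>others_support n M i. fstar n M (w(i := -1))) = 0"
    and "(\<Sum>w\<in>others_support n M i. fstar n M (w(i := -(M^2)))) = 0"
proof -
  have "M \<in> big_vals M" "-(M^2) \<in> big_vals M" "2 \<le> n"
    using n_ge_3 by (auto simp: big_vals_def)
  note agreeing = sum_others_support_agreeing[OF \<open>2 \<le> n\<close>]
  have card_smalls: "card ({2..<n} - {i}) = n - 2"
    using assms by simp
  note fstar_upd = fstar_big_agent[where v = "w(i := x)" for w x, OF assms others_support_fun_upd]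
  have "(\<Sum>w\<in>others_support n M i. fstar n M (w(i := M))) =
      (\<Sum>w\<in>others_support n M i. if big_others_agree w i M then fstar_weight n (card (dissenters n w i)) else 0)"
    using fstar_upd(1) by (intro sum.cong) simp_all
  also have "\<dots> = (\<Sum>D\<in>Pow ({2..<n} - {i}). fstar_weight n (card D))"
    by (rule agreeing[OF \<open>M \<in> big_vals M\<close>, where h = "fstar_weight n"])
  also have "\<dots> = 2"
    using n_ge_3 by (simp add: sum_Pow_fstar_weight card_smalls)
  finally show "(\<Sum>w\<in>others_support n M i. fstar n M (w(i := M))) = 2" .
  have "(\<Sum>w\<in>others_support n M i. fstar n M (w(i := 1))) =
      (\<Sum>w\<in>others_support n M i.
         if big_others_agree w i M then (if card (dissenters n w i) = 0 then 1 else 0) else 0)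
      + (\<Sum>w\<in>others_support n M i.
         if big_others_agree w i (-(M^2)) then (if card (dissenters n w i) = 0 then 1 else 0) else 0)"
    by (simp add: fstar_big_agent_report_one[OF assms] sum.distrib)
  also have "\<dots> = 2"
    using agreeing[OF \<open>M \<in> big_vals M\<close>, where h = "\<lambda>k. if k = 0 then 1 else 0 :: real"]
      agreeing[OF \<open>-(M^2) \<in> big_vals M\<close>, where h = "\<lambda>k. if k = 0 then 1 else 0 :: real"]
    by (simp add: sum_Pow_card_indicator)
  finally show "(\<Sum>w\<in>others_support n M i. fstar n M (w(i := 1))) = 2" .
  show "(\<Sum>w\<in>others_support n M i. fstar n M (w(i := -1))) = 0"
    and "(\<Sum>w\<in>others_support n M i. fstar n M (w(i := -(M^2)))) = 0"
    by (auto intro!: sum.neutral simp: fstar_upd(3))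
qed

lemma sum_fstar_small_agent:
  assumes "2 \<le> i" "i < n"
  shows "(\<Sum>w\<in>others_support n M i. fstar n M (w(i := M)))
      = (\<Sum>w\<in>others_support n M i. fstar n M (w(i := 1)))"
    and "(\<Sum>w\<in>others_support n M i. fstar n M (w(i := 1))) = 1 + real (n - 3) / real (n - 2)"
    and "(\<Sum>w\<in>others_support n M i. fstar n M (w(i := -1))) = 1 / real (n - 2)"
    and "(\<Sum>w\<in>others_support n M i. fstar n M (w(i := -(M^2)))) = 1 / real (n - 2)"
proof -
  have "M \<in> big_vals M" "-(M^2) \<in> big_vals M" "2 \<le> n"
    using n_ge_3 by (auto simp: big_vals_def)
  note agreeing = sum_others_support_agreeing[OF \<open>2 \<le> n\<close>]
  have card_smalls: "card ({2..<n} - {i}) = n - 3"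
    using assms by simp
  note fstar_upd = fstar_small_agent[where v = "w(i := x)" for w x, OF assms others_support_fun_upd]
  show "(\<Sum>w\<in>others_support n M i. fstar n M (w(i := M)))
      = (\<Sum>w\<in>others_support n M i. fstar n M (w(i := 1)))"
    using fstar_upd(1) by (intro sum.cong) simp_all
  have "(\<Sum>w\<in>others_support n M i. fstar n M (w(i := 1))) =
      (\<Sum>w\<in>others_support n M i. if big_others_agree w i M then fstar_weight n (card (dissenters n w i)) else 0)"
    using fstar_upd(1) by (intro sum.cong) simp_all
  also have "\<dots> = (\<Sum>D\<in>Pow ({2..<n} - {i}). fstar_weight n (card D))"
    by (rule agreeing[OF \<open>M \<in> big_vals M\<close>, where h = "fstar_weight n"])
  finally show "(\<Sum>w\<in>others_support n M i. fstar n M (w(i := 1))) = 1 + real (n - 3) / real (n - 2)"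
    by (simp add: sum_Pow_fstar_weight card_smalls)
  have "(\<Sum>w\<in>others_support n M i. fstar n M (w(i := -1))) =
      (\<Sum>w\<in>others_support n M i.
         if big_others_agree w i M then (if card (dissenters n w i) = 0 then 1 / real (n - 2) else 0) else 0)"
    using fstar_upd(2) by (intro sum.cong) simp_all
  also have "\<dots> = 1 / real (n - 2)"
    using agreeing[OF \<open>M \<in> big_vals M\<close>, where h = "\<lambda>k. if k = 0 then 1 / real (n - 2) else 0"]
    by (simp add: sum_Pow_card_indicator)
  finally show "(\<Sum>w\<in>others_support n M i. fstar n M (w(i := -1))) = 1 / real (n - 2)" .
  have "(\<Sum>w\<in>others_support n M i. fstar n M (w(i := -(M^2)))) =
      (\<Sum>w\<in>others_support n M i.
         if big_others_agree w i (-(M^2)) then (if card (dissenters n w i) = 0 then 1 / real (n - 2) else 0) else 0)"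
    using fstar_upd(3) by (intro sum.cong) simp_all
  also have "\<dots> = 1 / real (n - 2)"
    using agreeing[OF \<open>-(M^2) \<in> big_vals M\<close>, where h = "\<lambda>k. if k = 0 then 1 / real (n - 2) else 0"]
    by (simp add: sum_Pow_card_indicator)
  finally show "(\<Sum>w\<in>others_support n M i. fstar n M (w(i := -(M^2)))) = 1 / real (n - 2)" .
qed

lemma BIC_fstar: "BIC n M 0 (fstar n M)"
proof (rule BIC_if_interim_two_valued[OF M_pos])
  fix i assume "i < n"
  let ?c = "(1/2::real)^(n-1)"
  note interim = interim_zero[OF M_pos M_neq_1 \<open>i < n\<close>, of "fstar n M"]
  show "\<exists>P Q. Q \<le> P
      \<and> interim n M 0 (fstar n M) i M = P \<and> interim n M 0 (fstar n M) i 1 = P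
      \<and> interim n M 0 (fstar n M) i (-1) = Q \<and> interim n M 0 (fstar n M) i (-(M^2)) = Q"
  proof (cases "i < 2")
    case True
    then show ?thesis
      by (simp add: interim sum_fstar_big_agent)
  next
    case False
    then have "2 \<le> i" by simp
    let ?P = "?c * (1 + real (n - 3) / real (n - 2))" and ?Q = "?c * (1 / real (n - 2))"
    have "1 / real (n - 2) \<le> 1" "0 \<le> real (n - 3) / real (n - 2)"
      using n_ge_3 by simp_all
    then have "?Q \<le> ?P"
      by (intro mult_left_mono add_increasing2) simp_all
    moreover have "interim n M 0 (fstar n M) i M = ?P" "interim n M 0 (fstar n M) i 1 = ?P"
      "interim n M 0 (fstar n M) i (-1) = ?Q" "interim n M 0 (fstar n M) i (-(M^2)) = ?Q"
      using sum_fstar_small_agent[OF \<open>2 \<le> i\<close> \<open>i < n\<close>] by (simp_all only: interim)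
    ultimately show ?thesis by blast
  qed
qed

lemma total_value_profile:
  assumes "v \<in> PiE {..<n} (support0 M)"
  shows "(\<Sum>j<n. v j) = v 0 + v 1 + real (n - 2) - 2 * real (card (dissenters n v 0))"
proof -
  have "{..<n} = {..<2} \<union> {2..<n}"
    using n_ge_3 by auto
  then have "(\<Sum>j<n. v j) = (\<Sum>j<2. v j) + (\<Sum>j\<in>{2..<n}. v j)"
    by (metis finite_atLeastLessThan finite_lessThan ivl_disj_int_one(2) sum.union_disjoint)
  then have "(\<Sum>j<n. v j) = v 0 + v 1 + (\<Sum>j\<in>{2..<n}. v j)"
    by (simp add: numeral_2_eq_2)
  also have "(\<Sum>j\<in>{2..<n}. v j) = (\<Sum>j\<in>{2..<n}. 1 - 2 * (if v j = -1 then 1 else 0))"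
  proof (rule sum.cong)
    fix j assume "j \<in> {2..<n}"
    then have "v j \<in> small_vals"
      using PiE_mem[OF assms, of j] by (simp add: support0_def)
    then show "v j = 1 - 2 * (if v j = -1 then 1 else 0)"
      by (auto simp: small_vals_def)
  qed simp
  also have "\<dots> = real (n - 2) - 2 * (\<Sum>j\<in>{2..<n}. if v j = -1 then 1 else 0)"
    by (simp add: sum_subtractf sum_distrib_left)
  also have "(\<Sum>j\<in>{2..<n}. if v j = -1 then 1 else 0) = real (card (dissenters n v 0))"
  proof -
    have "dissenters n v 0 = {j \<in> {2..<n}. v j = -1}"
      by (auto simp: dissenters_def)
    then show ?thesis
      by (simp add: sum.inter_filter[symmetric])
  qed
  finally show ?thesis by simp
qed

lemma fstar_profile:
  assumes "v \<in> PiE {..<n} (support0 M)"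
  shows "fstar n M v = (if v 0 = M \<and> v 1 = M then fstar_weight n (card (dissenters n v 0)) else 0)"
proof -
  have off: "\<forall>j \<in> {..<n} - {0}. v j \<in> support0 M j"
    using assms by auto
  have "v 0 = M \<or> v 0 = -(M^2)"
    using PiE_mem[OF assms, of 0] n_ge_3 by (auto simp: support0_def big_vals_def)
  then show ?thesis
    using fstar_big_agent(1,3)[of 0 v, OF _ off] Vals_distinct[OF M_pos M_neq_1]
    by (auto simp: big_others_agree_big_agent)
qed

lemma unanimity_profile:
  assumes "v \<in> PiE {..<n} (support0 M)"
  shows "unanimity n v = (if v 0 = M \<and> v 1 = M \<and> card (dissenters n v 0) = 0 then 1 else 0)"
proof -
  have "v j > 0 \<longleftrightarrow> v j = M" if "j < 2" for j
    using PiE_mem[OF assms, of j] that n_ge_3 M_pos by (auto simp: support0_def big_vals_def)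
  moreover have "v j > 0 \<longleftrightarrow> v j \<noteq> -1" if "j \<in> {2..<n}" for j
    using PiE_mem[OF assms, of j] that by (auto simp: support0_def small_vals_def)
  moreover have "card (dissenters n v 0) = 0 \<longleftrightarrow> (\<forall>j \<in> {2..<n}. v j \<noteq> -1)"
    by (auto simp: dissenters_def)
  moreover have "(\<forall>j<n. v j > 0) \<longleftrightarrow> v 0 > 0 \<and> v 1 > 0 \<and> (\<forall>j \<in> {2..<n}. v j > 0)"
    using n_ge_3 by (auto simp: less_2_cases_iff) (metis One_nat_def atLeastLessThan_iff less_2_cases_iff not_less)
  ultimately have "(\<forall>j<n. v j > 0) \<longleftrightarrow> v 0 = M \<and> v 1 = M \<and> card (dissenters n v 0) = 0"
    by simp
  then show ?thesis
    by (simp add: unanimity_iff_all_positive)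
qed

lemma welfare_gain_profile:
  assumes "v \<in> PiE {..<n} (support0 M)"
  shows "(fstar n M v - unanimity n v) * (\<Sum>j<n. v j) =
    (if v 0 = M \<and> v 1 = M \<and> card (dissenters n v 0) = 1 then (2 * M + real n - 4) / real (n - 2) else 0)"
  using fstar_profile[OF assms] unanimity_profile[OF assms] total_value_profile[OF assms] n_ge_3
  by (auto simp: fstar_weight_def of_nat_diff)

lemma welfare_fstar_gt_unanimity:
  assumes "2 * M - (real n - 2) > 0"
  shows "welfare n M 0 (unanimity n) < welfare n M 0 (fstar n M)"
proof -
  let ?S = "PiE {..<n} (support0 M)"
  let ?gain = "\<lambda>v. (fstar n M v - unanimity n v) * (\<Sum>j<n. v j)"
  define v where "v = (others_profile n 0 M {2})(0 := M)"
  have "v \<in> ?S"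
    unfolding v_def using n_ge_3
    by (intro fun_upd_others_support_PiE others_profile_mem) (auto simp: support0_def big_vals_def)
  moreover have "v 0 = M" "v 1 = M"
    using n_ge_3 by (auto simp: v_def others_profile_def)
  moreover have "dissenters n v 0 = {2}"
    using n_ge_3 by (simp add: v_def dissenters_others_profile)
  moreover have "(2 * M + real n - 4) / real (n - 2) > 0"
    using assms n_ge_3 by simp
  ultimately have "0 < (\<Sum>u\<in>?S. ?gain u)"
    by (intro sum_pos2[of ?S v]) (auto simp: welfare_gain_profile finite_PiE support0_def big_vals_def small_vals_def)
  then show ?thesis
    unfolding welfare_zero[OF M_pos M_neq_1]
    by (simp add: sum_subtractf left_diff_distrib)
qed

end

theorem lemma5:
  fixes n :: nat and M :: real
  assumes "n \<ge> 3" and "M > 0"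
    and A: "2 / real n * (-(M^2) + M + real n - 2) + (real n - 2) / real n * (2 * M + real n - 4) < 0"
    and B: "2 * M - (real n - 2) > 0"
  shows "\<exists>f. is_SCF n M f \<and> anonymous n M f \<and> BIC n M 0 f
             \<and> welfare n M 0 f > welfare n M 0 (unanimity n)"
proof -
  \<comment> \<open>For \<open>M = 1\<close> the values would collapse to \<open>\<plusminus>1\<close>; (A) is needed only to exclude it.\<close>
  have "M \<noteq> 1"
  proof
    assume "M = 1"
    moreover have "0 \<le> 2 / real n * (real n - 2) + (real n - 2) / real n * (real n - 2)"
      using \<open>n \<ge> 3\<close> by simp
    ultimately show False
      using A by simp
  qed
  have "is_SCF n M (fstar n M)"
    using fstar_range[OF \<open>n \<ge> 3\<close>] by (simp add: is_SCF_def)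
  then show ?thesis
    using anonymous_fstar BIC_fstar[OF assms(1,2) \<open>M \<noteq> 1\<close>]
      welfare_fstar_gt_unanimity[OF assms(1,2) \<open>M \<noteq> 1\<close> B]
    by blast
qed

end
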